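(* Let $A\in\mathbb{R}^{n\times n}$ be Hurwitz, let $B_u\in\mathbb{R}^{n\times l}$ and $S_\eta\in\mathbb{R}^{n\times n_\eta}$ be given, and let $\bar\gamma>0$ be a given scalar. Let data samples $d_i=\begin{bmatrix}\hat x_i^\top & u_i^\top & \hat\eta_i^\top\end{bmatrix}^\top$, $i=1,\dots,N$, with $\hat x_i\in\mathbb{R}^n$, $u_i\in\mathbb{R}^l$, $\hat\eta_i\in\mathbb{R}^{n_\eta}$, be given and let $D=\sum_{i=1}^N d_id_i^\top$. Consider the convex program in the variables $Q=Q^\top\in\mathbb{R}^{n\times n}$, $\Theta_l\in\mathbb{R}^{n_\eta\times n}$, $B_l\in\mathbb{R}^{n_\eta\times l}$, $W=W^\top\in\mathbb{R}^{n_\eta\times n_\eta}$: $$\min\ \operatorname{tr}(W)\quad\text{s.t.}\quad \begin{bmatrix}AQ+QA^\top & S_\eta\Theta_l+\bar\gamma Q\\ \star & -2\bar\gamma I\end{bmatrix}\prec 0,\qquad \operatorname{tr}(TDT^\top)\le\operatorname{tr}(W),\qquad Q\succ 0,$$ where $T:=\begin{bmatrix}\Theta_l & B_l & -I_{n_\eta}\end{bmatrix}$. Let $(Q^\star,\Theta_l^\star,B_l^\star,W^\star)$ be an optimizer. Set $S_{\eta_l}=S_\eta$, $\Theta_l=\Theta_l^\star$, $B_l=B_l^\star$. Then the model $$\dot x=Ax+B_uu+S_{\eta}(\Theta_l^\star x+B_l^\star u)$$ is asymptotically stable (for $u=0$), i.e. $(A+S_\eta\Theta_l^\star)Q^\star+Q^\star(A+S_\eta\Theta_l^\star)^\top\prec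 0$ and hence $A+S_\eta\Theta_l^\star$ is Hurwitz. Moreover the cost $J=\sum_{i=1}^N e_i^\top e_i$ with $e_i:=\Theta_l^\star\hat x_i+B_l^\star u_i-\hat\eta_i$ satisfies $J\le\operatorname{tr}(W^\star)$.
   Context: Setting: one seeks a linear uncertainty model $\eta_l(x,u)=\Theta_lx+B_lu$ to augment the known linear model $\dot x=Ax+B_uu$ as $\dot x=Ax+B_uu+S_{\eta_l}\eta_l(x,u)$, fitted to data $(\hat x_i,u_i,\hat\eta_i)$ (estimates of state, input, and uncertainty) by the quadratic cost $J=\sum_i e_i^\top e_i=\sum_i d_i^\top T^\top T d_i=\operatorname{tr}(TDT^\top)$ with $T=[\Theta_l\ \ B_l\ \ -I]$, $e_i=Td_i$. The matrix $S_\eta$ indicates in which state equations the uncertainty enters in the true system $\dot x_s=Ax_s+B_uu+S_\eta\eta(x_s,u)+B_\omega\omega$. A matrix is Hurwitz if all its eigenvalues have negative real part; $\star$ denotes blocks determined by symmetry. *)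

theory Defs
  imports "HOL-Analysis.Analysis"
begin

text \<open>Matrices are HOL-Analysis vectors of vectors: M :: real^'c^'r has rows indexed by 'r.\<close>

definition sym_mat :: "real^'n^'n \<Rightarrow> bool" where
  "sym_mat M \<longleftrightarrow> transpose M = M"

definition pos_def :: "real^'n^'n \<Rightarrow> bool" where
  "pos_def M \<longleftrightarrow> sym_mat M \<and> (\<forall>x. x \<noteq> 0 \<longrightarrow> 0 < x \<bullet> (M *v x))"

definition neg_def :: "real^'n^'n \<Rightarrow> bool" where
  "neg_def M \<longleftrightarrow> pos_def (- M)"

definition cmat :: "real^'n^'m \<Rightarrow> complex^'n^'m" where
  "cmat M = (\<chi> i j. complex_of_real (M $ i $ j))"

definition hurwitz :: "real^'n^'n \<Rightarrow> bool" where
  "hurwitz M \<longleftrightarrow>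
     (\<forall>(c::complex) (v::complex^'n). v \<noteq> 0 \<and> cmat M *v v = c *s v \<longrightarrow> Re c < 0)"

definition lmi_mat ::
  "real^'n^'n \<Rightarrow> real^'k^'n \<Rightarrow> real \<Rightarrow> real^'n^'n \<Rightarrow> real^'n^'k \<Rightarrow> real^('n + 'n)^('n + 'n)" where
  "lmi_mat A S \<gamma> Q \<Theta> =
    (let M11 = A ** Q + Q ** transpose A;
         M12 = S ** \<Theta> + \<gamma> *\<^sub>R Q;
         M22 = (- 2 * \<gamma>) *\<^sub>R (mat 1 :: real^'n^'n)
     in (\<chi> i j. case (i, j) of
           (Inl a, Inl b) \<Rightarrow> M11 $ a $ b
         | (Inl a, Inr b) \<Rightarrow> M12 $ a $ b
         | (Inr a, Inl b) \<Rightarrow> (transpose M12) $ a $ b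
         | (Inr a, Inr b) \<Rightarrow> M22 $ a $ b))"

definition dvec :: "real^'n \<Rightarrow> real^'l \<Rightarrow> real^'k \<Rightarrow> real^('n + ('l + 'k))" where
  "dvec x u \<eta> = (\<chi> j. case j of Inl a \<Rightarrow> x $ a | Inr (Inl b) \<Rightarrow> u $ b | Inr (Inr c) \<Rightarrow> \<eta> $ c)"

definition Tmat :: "real^'n^'k \<Rightarrow> real^'l^'k \<Rightarrow> real^('n + ('l + 'k))^'k" where
  "Tmat \<Theta> B = (\<chi> r j. case j of Inl a \<Rightarrow> \<Theta> $ r $ a | Inr (Inl b) \<Rightarrow> B $ r $ b
                        | Inr (Inr c) \<Rightarrow> - (mat 1 :: real^'k^'k) $ r $ c)"

definition outer :: "real^'m \<Rightarrow> real^'m^'m" where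
  "outer d = (\<chi> i j. d $ i * d $ j)"

definition feasible ::
  "real^'n^'n \<Rightarrow> real^'k^'n \<Rightarrow> real \<Rightarrow> real^('n + ('l + 'k))^('n + ('l + 'k))
   \<Rightarrow> real^'n^'n \<Rightarrow> real^'n^'k \<Rightarrow> real^'l^'k \<Rightarrow> real^'k^'k \<Rightarrow> bool" where
  "feasible A S \<gamma> D Q \<Theta> B W \<longleftrightarrow>
     sym_mat Q \<and> sym_mat W \<and>
     neg_def (lmi_mat A S \<gamma> Q \<Theta>) \<and>
     trace (Tmat \<Theta> B ** D ** transpose (Tmat \<Theta> B)) \<le> trace W \<and>
     pos_def Q"

end

theory Submission
  imports Defs
begin

text \<open>Testing the LMI with the vector (x, Q x) makes the \<gamma>-terms cancel and leaves exactly the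
  Lyapunov form x^T ((A + S \<Theta>) Q + Q (A + S \<Theta>)^T) x, so the LMI gives the Lyapunov inequality for
  A + S \<Theta> with the positive definite certificate Q. If (A + S \<Theta>) v = c v for a complex v = a + i b,
  then, with Q p = a and Q q = b, the Lyapunov forms at p and q add up to 2 Re c (p^T Q p + q^T Q q),
  which forces Re c < 0. The cost bound is the second constraint, since the trace of T D T^T is the
  sum of the squared residuals T d_i.\<close>

lemma sum_UNIV_Plus:
  "(\<Sum>j\<in>(UNIV::('a::finite + 'b::finite) set). f j) = (\<Sum>a\<in>UNIV. f (Inl a)) + (\<Sum>b\<in>UNIV. f (Inr b))"
  by (subst UNIV_Plus_UNIV[symmetric], subst sum.Plus) (simp_all add: comp_def)

lemma inner_transpose_right: "x \<bullet> (transpose M *v y) = (M *v x) \<bullet> (y::real^_)"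
  by (simp add: dot_lmul_matrix[symmetric] inner_commute)

lemma transpose_add: "transpose (A + B) = transpose A + transpose (B::'a::comm_semiring_1^'n^'m)"
  by (simp add: transpose_def vec_eq_iff)

lemma transpose_uminus: "transpose (- A) = - transpose (A::'a::comm_ring_1^'n^'m)"
  by (simp add: transpose_def vec_eq_iff)

lemma matrix_add_rdistrib: "(B + C) ** A = B ** A + C ** (A::'a::semiring_1^_^_)"
  by (vector matrix_matrix_mult_def sum.distrib[symmetric] field_simps)

lemma inner_uminus_matrix: "x \<bullet> ((- M) *v x) = - (x \<bullet> (M *v (x::real^_)))"
  by (simp add: matrix_vector_mult_def inner_vec_def sum_negf)

lemma neg_def_iff: "neg_def M \<longleftrightarrow> sym_mat M \<and> (\<forall>x. x \<noteq> 0 \<longrightarrow> x \<bullet> (M *v x) < 0)"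
  unfolding neg_def_def pos_def_def sym_mat_def transpose_uminus inner_uminus_matrix by auto

lemma sym_mat_inner_commute: "sym_mat Q \<Longrightarrow> x \<bullet> (Q *v y) = (Q *v x) \<bullet> (y::real^_)"
  using inner_transpose_right[of x Q y] by (simp add: sym_mat_def)

lemma pos_def_inner_nonneg: "pos_def Q \<Longrightarrow> 0 \<le> x \<bullet> (Q *v x)"
  unfolding pos_def_def by (cases "x = 0") (auto intro: less_imp_le)

lemma pos_def_surj:
  fixes Q :: "real^'n^'n"
  assumes "pos_def Q"
  shows "surj ((*v) Q)"
proof -
  have "inj ((*v) Q)"
  proof (rule injI)
    fix x y assume "Q *v x = Q *v y"
    then have "(x - y) \<bullet> (Q *v (x - y)) = 0" by (simp add: matrix_vector_mult_diff_distrib)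
    with assms show "x = y" unfolding pos_def_def by (metis less_irrefl right_minus_eq)
  qed
  then show ?thesis
    using linear_injective_imp_surjective matrix_vector_mul_linear by blast
qed

lemma inner_lyapunov_form:
  fixes F Q :: "real^'n^'n"
  assumes "sym_mat Q"
  shows "x \<bullet> ((F ** Q + Q ** transpose F) *v x) = 2 * (x \<bullet> (F *v (Q *v x)))"
  by (simp add: matrix_vector_mult_add_rdistrib matrix_vector_mul_assoc[symmetric] inner_add_right
      sym_mat_inner_commute[OF assms, of x] inner_transpose_right inner_commute
      del: transpose_matrix_vector)

definition join_vec :: "'a^'m \<Rightarrow> 'a^'n \<Rightarrow> 'a^('m + 'n)" where
  "join_vec x y = (\<chi> j. case j of Inl a \<Rightarrow> x $ a | Inr b \<Rightarrow> y $ b)"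

lemma join_vec_eq_0_iff: "join_vec x y = 0 \<longleftrightarrow> x = 0 \<and> y = 0"
proof
  assume "join_vec x y = 0"
  then have "join_vec x y $ Inl i = 0" "join_vec x y $ Inr j = 0" for i j by simp_all
  then show "x = 0 \<and> y = 0" by (simp add: join_vec_def vec_eq_iff)
qed (simp add: join_vec_def vec_eq_iff split: sum.split)

lemma inner_block_matrix:
  fixes M11 :: "real^'a^'a" and M12 :: "real^'b^'a" and M21 :: "real^'a^'b" and M22 :: "real^'b^'b"
  shows "join_vec x y \<bullet>
     ((\<chi> i j. case (i, j) of (Inl a, Inl b) \<Rightarrow> M11 $ a $ b | (Inl a, Inr b) \<Rightarrow> M12 $ a $ b
         | (Inr a, Inl b) \<Rightarrow> M21 $ a $ b | (Inr a, Inr b) \<Rightarrow> M22 $ a $ b) *v join_vec x y)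
   = x \<bullet> (M11 *v x) + x \<bullet> (M12 *v y) + y \<bullet> (M21 *v x) + y \<bullet> (M22 *v y)"
  unfolding join_vec_def inner_vec_def matrix_vector_mult_def
  by (simp add: sum_UNIV_Plus distrib_left sum.distrib)

lemma inner_lmi_mat_join_vec:
  fixes A Q :: "real^'n^'n" and S :: "real^'k^'n" and \<Theta> :: "real^'n^'k"
  assumes "sym_mat Q"
  shows "join_vec x (Q *v x) \<bullet> (lmi_mat A S \<gamma> Q \<Theta> *v join_vec x (Q *v x))
       = x \<bullet> (((A + S ** \<Theta>) ** Q + Q ** transpose (A + S ** \<Theta>)) *v x)"
proof -
  define y where "y = Q *v x"
  let ?M12 = "S ** \<Theta> + \<gamma> *\<^sub>R Q"
  have Qx: "x \<bullet> (Q *v w) = y \<bullet> w" for w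
    using sym_mat_inner_commute[OF assms] y_def by simp
  have block: "join_vec x y \<bullet> (lmi_mat A S \<gamma> Q \<Theta> *v join_vec x y) =
      x \<bullet> ((A ** Q + Q ** transpose A) *v x) + x \<bullet> (?M12 *v y) + y \<bullet> (transpose ?M12 *v x)
      + y \<bullet> (((- 2 * \<gamma>) *\<^sub>R (mat 1 :: real^'n^'n)) *v y)"
    unfolding lmi_mat_def Let_def by (rule inner_block_matrix)
  have lyap_A: "x \<bullet> ((A ** Q + Q ** transpose A) *v x) = 2 * (x \<bullet> (A *v y))"
    unfolding inner_lyapunov_form[OF assms] y_def ..
  have M21: "y \<bullet> (transpose ?M12 *v x) = x \<bullet> (?M12 *v y)"
    by (simp add: inner_transpose_right inner_commute del: transpose_matrix_vector)
  have M12: "x \<bullet> (?M12 *v y) = x \<bullet> ((S ** \<Theta>) *v y) + \<gamma> * (y \<bullet> y)"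
    by (simp add: matrix_vector_mult_add_rdistrib inner_add_right scaleR_matrix_vector_assoc[symmetric] Qx)
  have M22: "y \<bullet> (((- 2 * \<gamma>) *\<^sub>R (mat 1 :: real^'n^'n)) *v y) = - 2 * \<gamma> * (y \<bullet> y)"
    by (simp only: scaleR_matrix_vector_assoc[symmetric] matrix_vector_mul_lid inner_scaleR_right)
  have lyap_F: "x \<bullet> (((A + S ** \<Theta>) ** Q + Q ** transpose (A + S ** \<Theta>)) *v x)
      = 2 * (x \<bullet> (A *v y)) + 2 * (x \<bullet> ((S ** \<Theta>) *v y))"
    unfolding inner_lyapunov_form[OF assms]
    by (simp add: matrix_vector_mult_add_rdistrib inner_add_right y_def)
  have "join_vec x y \<bullet> (lmi_mat A S \<gamma> Q \<Theta> *v join_vec x y)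
      = x \<bullet> (((A + S ** \<Theta>) ** Q + Q ** transpose (A + S ** \<Theta>)) *v x)"
    unfolding block lyap_A M21 M12 M22 lyap_F by (simp add: algebra_simps)
  then show ?thesis unfolding y_def .
qed

lemma lmi_mat_imp_lyapunov:
  fixes A Q :: "real^'n^'n" and S :: "real^'k^'n" and \<Theta> :: "real^'n^'k"
  assumes Q: "sym_mat Q" and lmi: "neg_def (lmi_mat A S \<gamma> Q \<Theta>)"
  shows "neg_def ((A + S ** \<Theta>) ** Q + Q ** transpose (A + S ** \<Theta>))"
  unfolding neg_def_iff
proof (intro conjI allI impI)
  show "sym_mat ((A + S ** \<Theta>) ** Q + Q ** transpose (A + S ** \<Theta>))"
    using Q unfolding sym_mat_def by (simp add: transpose_add matrix_transpose_mul add.commute)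
next
  fix x :: "real^'n" assume "x \<noteq> 0"
  then have "join_vec x (Q *v x) \<noteq> 0" by (simp add: join_vec_eq_0_iff)
  with lmi have "join_vec x (Q *v x) \<bullet> (lmi_mat A S \<gamma> Q \<Theta> *v join_vec x (Q *v x)) < 0"
    unfolding neg_def_iff by blast
  then show "x \<bullet> (((A + S ** \<Theta>) ** Q + Q ** transpose (A + S ** \<Theta>)) *v x) < 0"
    unfolding inner_lmi_mat_join_vec[OF Q] .
qed

lemma cmat_eigenvector_Re_Im:
  fixes F :: "real^'n^'n"
  assumes "cmat F *v v = c *s v"
  defines "a \<equiv> \<chi> i. Re (v $ i)" and "b \<equiv> \<chi> i. Im (v $ i)"
  shows "F *v a = Re c *\<^sub>R a - Im c *\<^sub>R b" and "F *v b = Im c *\<^sub>R a + Re c *\<^sub>R b"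
proof -
  have row: "(\<Sum>j\<in>UNIV. complex_of_real (F $ i $ j) * v $ j) = c * v $ i" for i
    using assms(1) unfolding vec_eq_iff cmat_def matrix_vector_mult_def by simp
  show "F *v a = Re c *\<^sub>R a - Im c *\<^sub>R b"
    using arg_cong[OF row, of Re]
    unfolding vec_eq_iff a_def b_def matrix_vector_mult_def by simp
  show "F *v b = Im c *\<^sub>R a + Re c *\<^sub>R b"
    using arg_cong[OF row, of Im]
    unfolding vec_eq_iff a_def b_def matrix_vector_mult_def by (simp add: algebra_simps)
qed

lemma lyapunov_imp_hurwitz:
  fixes F Q :: "real^'n^'n"
  assumes Q: "pos_def Q" and lyap: "neg_def (F ** Q + Q ** transpose F)"
  shows "hurwitz F"
  unfolding hurwitz_def
proof (intro allI impI, elim conjE)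
  fix c :: complex and v :: "complex^'n"
  assume "v \<noteq> 0" and eig: "cmat F *v v = c *s v"
  define a :: "real^'n" where "a = (\<chi> i. Re (v $ i))"
  define b :: "real^'n" where "b = (\<chi> i. Im (v $ i))"
  have "a \<noteq> 0 \<or> b \<noteq> 0"
    using \<open>v \<noteq> 0\<close> unfolding a_def b_def vec_eq_iff by (auto simp: complex_eq_iff)
  moreover obtain p q where p: "Q *v p = a" and q: "Q *v q = b"
    using pos_def_surj[OF Q] by (metis surjD)
  ultimately have pq: "p \<noteq> 0 \<or> q \<noteq> 0" by auto
  have Qsym: "sym_mat Q" using Q pos_def_def by blast
  let ?L = "\<lambda>x. x \<bullet> ((F ** Q + Q ** transpose F) *v x)"
  have L_neg: "?L x < 0" if "x \<noteq> 0" for x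
    using lyap that unfolding neg_def_iff by blast
  then have L_nonpos: "?L x \<le> 0" for x
    by (cases "x = 0") (auto intro: less_imp_le)
  have "?L p + ?L q < 0"
    using pq L_neg L_nonpos by (meson add_neg_nonpos add_nonpos_neg)
  moreover have "?L p + ?L q = 2 * Re c * (p \<bullet> a + q \<bullet> b)"
  proof -
    have "p \<bullet> b = q \<bullet> a"
      using sym_mat_inner_commute[OF Qsym, of p q] p q by (simp add: inner_commute)
    then show ?thesis
      unfolding inner_lyapunov_form[OF Qsym] p q cmat_eigenvector_Re_Im[OF eig, folded a_def b_def]
      by (simp add: inner_diff_right inner_add_right algebra_simps)
  qed
  moreover have "p \<bullet> a + q \<bullet> b > 0"
  proof -
    have "p \<bullet> a \<ge> 0" "q \<bullet> b \<ge> 0" using pos_def_inner_nonneg[OF Q] p q by auto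
    moreover have "p \<noteq> 0 \<Longrightarrow> p \<bullet> a > 0" "q \<noteq> 0 \<Longrightarrow> q \<bullet> b > 0"
      using Q p q unfolding pos_def_def by auto
    ultimately show ?thesis using pq by fastforce
  qed
  ultimately have "Re c * (p \<bullet> a + q \<bullet> b) < 0" by linarith
  then show "Re c < 0"
    using \<open>p \<bullet> a + q \<bullet> b > 0\<close> by (simp add: mult_less_0_iff)
qed

lemma Tmat_mult_dvec: "Tmat \<Theta> B *v dvec x u \<eta> = \<Theta> *v x + B *v u - \<eta>"
  unfolding vec_eq_iff
  by (simp add: Tmat_def dvec_def matrix_vector_mult_def sum_UNIV_Plus mat_def sum_negf
      if_distrib[of "\<lambda>z. z * _"] cong: if_cong)

lemma trace_congruence_outer:
  fixes T :: "real^'m^'k"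
  shows "trace (T ** outer d ** transpose T) = (T *v d) \<bullet> (T *v d)"
  unfolding trace_def matrix_matrix_mult_def transpose_def outer_def inner_vec_def
    matrix_vector_mult_def
  by (simp add: sum_product sum_distrib_left sum_distrib_right mult_ac)

lemma trace_congruence_sum_outer:
  fixes T :: "real^'m^'k" and d :: "'i \<Rightarrow> real^'m"
  shows "trace (T ** (\<Sum>i\<in>I. outer (d i)) ** transpose T) = (\<Sum>i\<in>I. (T *v d i) \<bullet> (T *v d i))"
proof (induction I rule: infinite_finite_induct)
  case (insert i I)
  then show ?case
    by (simp add: matrix_add_ldistrib matrix_add_rdistrib trace_add trace_congruence_outer)
qed (simp_all add: trace_def)

theorem theorem2:
  fixes A :: "real^'n^'n" and Bu :: "real^'l^'n" and S :: "real^'k^'n"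
    and \<gamma> :: real and N :: nat
    and xh :: "nat \<Rightarrow> real^'n" and u :: "nat \<Rightarrow> real^'l" and \<eta>h :: "nat \<Rightarrow> real^'k"
    and D :: "real^('n + ('l + 'k))^('n + ('l + 'k))"
    and Q :: "real^'n^'n" and \<Theta> :: "real^'n^'k" and Bl :: "real^'l^'k" and W :: "real^'k^'k"
  assumes hA: "hurwitz A"
    and h\<gamma>: "\<gamma> > 0"
    and hD: "D = (\<Sum>i\<in>{1..N}. outer (dvec (xh i) (u i) (\<eta>h i)))"
    and hfeas: "feasible A S \<gamma> D Q \<Theta> Bl W"
    and hopt: "\<And>Q' \<Theta>' Bl' W'. feasible A S \<gamma> D Q' \<Theta>' Bl' W' \<Longrightarrow> trace W \<le> trace W'"
  shows "neg_def ((A + S ** \<Theta>) ** Q + Q ** transpose (A + S ** \<Theta>))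
       \<and> hurwitz (A + S ** \<Theta>)
       \<and> (\<Sum>i\<in>{1..N}. (\<Theta> *v xh i + Bl *v u i - \<eta>h i) \<bullet> (\<Theta> *v xh i + Bl *v u i - \<eta>h i)) \<le> trace W"
proof -
  have Q: "pos_def Q" and lmi: "neg_def (lmi_mat A S \<gamma> Q \<Theta>)"
    and cost: "trace (Tmat \<Theta> Bl ** D ** transpose (Tmat \<Theta> Bl)) \<le> trace W"
    using hfeas unfolding feasible_def by auto
  have lyap: "neg_def ((A + S ** \<Theta>) ** Q + Q ** transpose (A + S ** \<Theta>))"
    using lmi_mat_imp_lyapunov[OF _ lmi] Q by (simp add: pos_def_def)
  moreover have "hurwitz (A + S ** \<Theta>)"
    using lyapunov_imp_hurwitz[OF Q lyap] .
  moreover have "trace (Tmat \<Theta> Bl ** D ** transpose (Tmat \<Theta> Bl)) =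
      (\<Sum>i\<in>{1..N}. (\<Theta> *v xh i + Bl *v u i - \<eta>h i) \<bullet> (\<Theta> *v xh i + Bl *v u i - \<eta>h i))"
    unfolding hD trace_congruence_sum_outer Tmat_mult_dvec ..
  ultimately show ?thesis using cost by simp
qed

end
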